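(* There exists $n_0$ such that the following holds for all $n\ge n_0$. Let $G$ be a simple connected graph on $n$ vertices with $\lambda_1(G)=\alpha(n)$, and let $f$ be a harmonic eigenfunction for $\lambda_1(G)$. Then every edge $wz$ with $f(w)<0\le f(z)$ is a bridge of $G$, i.e. $G$ minus that edge is disconnected.
   Context: For a connected simple graph $G$ with degree function $d$, \[ \lambda_1(G)=\inf_{f\neq 0,\ \sum_u f(u)d(u)=0}\frac{\sum_{u\sim v}(f(u)-f(v))^2}{\sum_v f(v)^2 d(v)}, \] where the numerator sums over edges. This is the second smallest eigenvalue of the normalized Laplacian. A harmonic eigenfunction is a nonzero $f$ with $\sum_u f(u)d(u)=0$ attaining the infimum. Also, \[ \alpha(n)=\min\{\lambda_1(G): G\text{ simple connected on } n\text{ vertices}\}. \] *)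

theory Defs
  imports Complex_Main
begin

definition simple_graph :: "nat \<Rightarrow> (nat \<Rightarrow> nat \<Rightarrow> bool) \<Rightarrow> bool" where
  "simple_graph n E \<longleftrightarrow> (\<forall>u v. E u v \<longrightarrow> u < n \<and> v < n \<and> u \<noteq> v \<and> E v u)"

definition connected_graph :: "nat \<Rightarrow> (nat \<Rightarrow> nat \<Rightarrow> bool) \<Rightarrow> bool" where
  "connected_graph n E \<longleftrightarrow> 0 < n \<and> (\<forall>u<n. \<forall>v<n. E\<^sup>*\<^sup>* u v)"

definition degree :: "nat \<Rightarrow> (nat \<Rightarrow> nat \<Rightarrow> bool) \<Rightarrow> nat \<Rightarrow> nat" where
  "degree n E u = card {v. v < n \<and> E u v}"

definition rayleigh :: "nat \<Rightarrow> (nat \<Rightarrow> nat \<Rightarrow> bool) \<Rightarrow> (nat \<Rightarrow> real) \<Rightarrow> real" where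
  "rayleigh n E f =
     (\<Sum>(u,v)\<in>{(u,v). u < v \<and> v < n \<and> E u v}. (f u - f v)^2) /
     (\<Sum>v<n. (f v)^2 * real (degree n E v))"

definition admissible :: "nat \<Rightarrow> (nat \<Rightarrow> nat \<Rightarrow> bool) \<Rightarrow> (nat \<Rightarrow> real) \<Rightarrow> bool" where
  "admissible n E f \<longleftrightarrow> (\<exists>u<n. f u \<noteq> 0) \<and> (\<Sum>u<n. f u * real (degree n E u)) = 0"

definition lambda1 :: "nat \<Rightarrow> (nat \<Rightarrow> nat \<Rightarrow> bool) \<Rightarrow> real" where
  "lambda1 n E = Inf {rayleigh n E f | f. admissible n E f}"

definition harmonic_eigenfunction :: "nat \<Rightarrow> (nat \<Rightarrow> nat \<Rightarrow> bool) \<Rightarrow> (nat \<Rightarrow> real) \<Rightarrow> bool" where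
  "harmonic_eigenfunction n E f \<longleftrightarrow> admissible n E f \<and> rayleigh n E f = lambda1 n E"

text \<open>alpha(n): minimum of lambda1 over simple connected graphs on n vertices
 (finitely many graphs, so Inf is the minimum).\<close>
definition alpha :: "nat \<Rightarrow> real" where
  "alpha n = Inf {lambda1 n E | E. simple_graph n E \<and> connected_graph n E}"

definition delete_edge :: "(nat \<Rightarrow> nat \<Rightarrow> bool) \<Rightarrow> nat \<Rightarrow> nat \<Rightarrow> (nat \<Rightarrow> nat \<Rightarrow> bool)" where
  "delete_edge E w z = (\<lambda>x y. E x y \<and> {x, y} \<noteq> {w, z})"

definition is_bridge :: "nat \<Rightarrow> (nat \<Rightarrow> nat \<Rightarrow> bool) \<Rightarrow> nat \<Rightarrow> nat \<Rightarrow> bool" where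
  "is_bridge n E w z \<longleftrightarrow> E w z \<and> \<not> connected_graph n (delete_edge E w z)"

end

theory Submission imports Defs begin

text \<open>If the edge \<open>wz\<close> with \<open>f w < 0 \<le> f z\<close> is not a bridge, delete it and shift \<open>f\<close> by the
constant that restores orthogonality to the degrees of the smaller graph. The edge energy drops by
\<open>(f w - f z)\<^sup>2 \<ge> f w\<^sup>2 + f z\<^sup>2\<close>, while the degree norm drops by at most \<open>2 (f w\<^sup>2 + f z\<^sup>2)\<close>;
since \<open>\<lambda>\<^sub>1(G - wz) \<ge> \<alpha>(n) = \<lambda>\<^sub>1(G)\<close> this forces \<open>\<alpha>(n) \<ge> 1/2\<close>. A path with a
\<open>\<plusminus>1\<close> test function shows \<open>\<alpha>(n) \<le> 4/(n - 1) < 1/2\<close> for \<open>n \<ge> 10\<close>.\<close>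

definition edges :: "nat \<Rightarrow> (nat \<Rightarrow> nat \<Rightarrow> bool) \<Rightarrow> (nat \<times> nat) set" where
  "edges n E = {(u,v). u < v \<and> v < n \<and> E u v}"

definition dirichlet_energy :: "nat \<Rightarrow> (nat \<Rightarrow> nat \<Rightarrow> bool) \<Rightarrow> (nat \<Rightarrow> real) \<Rightarrow> real" where
  "dirichlet_energy n E f = (\<Sum>(u,v)\<in>edges n E. (f u - f v)^2)"

definition degree_norm :: "nat \<Rightarrow> (nat \<Rightarrow> nat \<Rightarrow> bool) \<Rightarrow> (nat \<Rightarrow> real) \<Rightarrow> real" where
  "degree_norm n E f = (\<Sum>v<n. (f v)^2 * real (degree n E v))"

definition volume :: "nat \<Rightarrow> (nat \<Rightarrow> nat \<Rightarrow> bool) \<Rightarrow> real" where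
  "volume n E = (\<Sum>u<n. real (degree n E u))"

lemma rayleigh_eq: "rayleigh n E f = dirichlet_energy n E f / degree_norm n E f"
  by (simp add: rayleigh_def dirichlet_energy_def degree_norm_def edges_def)

lemma finite_edges: "finite (edges n E)"
  by (rule finite_subset[of _ "{..<n} \<times> {..<n}"]) (auto simp: edges_def)

lemma rayleigh_nonneg: "0 \<le> rayleigh n E f"
  unfolding rayleigh_def by (intro divide_nonneg_nonneg sum_nonneg) auto

lemma lambda1_le_rayleigh: "admissible n E f \<Longrightarrow> lambda1 n E \<le> rayleigh n E f"
  unfolding lambda1_def
  by (rule cInf_lower) (auto intro!: bdd_belowI[of _ 0] rayleigh_nonneg)

lemma finite_lambda1_connected_graphs:
  "finite {lambda1 n E | E. simple_graph n E \<and> connected_graph n E}"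
proof (rule finite_subset)
  show "{lambda1 n E | E. simple_graph n E \<and> connected_graph n E}
     \<subseteq> (\<lambda>S. lambda1 n (\<lambda>u v. (u,v) \<in> S)) ` Pow ({..<n} \<times> {..<n})"
  proof
    fix x assume "x \<in> {lambda1 n E | E. simple_graph n E \<and> connected_graph n E}"
    then obtain E where x: "x = lambda1 n E" and s: "simple_graph n E" by auto
    then have "E = (\<lambda>u v. (u,v) \<in> {(u,v). u < n \<and> v < n \<and> E u v})"
      unfolding simple_graph_def by (auto simp: fun_eq_iff)
    then show "x \<in> (\<lambda>S. lambda1 n (\<lambda>u v. (u,v) \<in> S)) ` Pow ({..<n} \<times> {..<n})"
      unfolding x using s unfolding simple_graph_def
      by (intro image_eqI[of _ _ "{(u,v). u < n \<and> v < n \<and> E u v}"]) auto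
  qed
qed auto

lemma alpha_le_lambda1: "simple_graph n E \<Longrightarrow> connected_graph n E \<Longrightarrow> alpha n \<le> lambda1 n E"
  unfolding alpha_def
  by (rule cInf_lower) (auto intro!: bdd_below_finite finite_lambda1_connected_graphs)

lemma degree_ge_1:
  assumes s: "simple_graph n E" and c: "connected_graph n E" and n: "2 \<le> n" and u: "u < n"
  shows "1 \<le> degree n E u"
proof -
  define v where "v = (if u = 0 then 1 else 0::nat)"
  have v: "v < n" "v \<noteq> u" using n u by (auto simp: v_def)
  have "E\<^sup>*\<^sup>* u v" using c u v unfolding connected_graph_def by auto
  then obtain y where "E u y" using v(2) by (metis converse_rtranclpE)
  then have "y \<in> {v. v < n \<and> E u v}" using s unfolding simple_graph_def by auto
  then have "0 < card {v. v < n \<and> E u v}" by (auto simp: card_gt_0_iff)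
  then show ?thesis unfolding degree_def by simp
qed

lemma degree_norm_pos:
  assumes "\<And>u. u < n \<Longrightarrow> 1 \<le> degree n E u" and "u < n" and "f u \<noteq> 0"
  shows "0 < degree_norm n E f"
proof -
  have "0 < (f u)^2 * real (degree n E u)"
    using assms by (intro mult_pos_pos) fastforce+
  also have "\<dots> \<le> degree_norm n E f"
    unfolding degree_norm_def using assms(2) by (intro member_le_sum) auto
  finally show ?thesis .
qed

lemma dirichlet_energy_add_const:
  "dirichlet_energy n E (\<lambda>u. f u + c) = dirichlet_energy n E f"
  by (simp add: dirichlet_energy_def)

lemma degree_norm_add_const:
  "degree_norm n E (\<lambda>u. f u + c) = degree_norm n E f
     + 2 * c * (\<Sum>u<n. f u * real (degree n E u)) + c^2 * volume n E"
  by (simp add: degree_norm_def volume_def power2_eq_square algebra_simps sum.distrib sum_distrib_left)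

definition path_graph :: "nat \<Rightarrow> nat \<Rightarrow> nat \<Rightarrow> bool" where
  "path_graph n u v \<longleftrightarrow> u < n \<and> v < n \<and> (v = Suc u \<or> u = Suc v)"

definition path_sign :: "nat \<Rightarrow> nat \<Rightarrow> real" where
  "path_sign n v = (if 2 * v + 1 < n then -1 else if 2 * v + 1 = n then 0 else 1)"

lemma simple_path_graph: "simple_graph n (path_graph n)"
  by (auto simp: simple_graph_def path_graph_def)

lemma path_graph_rtranclp: "u + k < n \<Longrightarrow> (path_graph n)\<^sup>*\<^sup>* u (u + k) \<and> (path_graph n)\<^sup>*\<^sup>* (u + k) u"
proof (induction k)
  case (Suc k)
  have "path_graph n (u + k) (u + Suc k)" "path_graph n (u + Suc k) (u + k)"
    using Suc.prems by (auto simp: path_graph_def)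
  moreover have "(path_graph n)\<^sup>*\<^sup>* u (u + k)" "(path_graph n)\<^sup>*\<^sup>* (u + k) u"
    using Suc by simp_all
  ultimately show ?case
    using rtranclp.rtrancl_into_rtrancl converse_rtranclp_into_rtranclp by metis
qed simp

lemma connected_path_graph: "0 < n \<Longrightarrow> connected_graph n (path_graph n)"
  unfolding connected_graph_def
proof (intro conjI allI impI)
  fix u v assume "u < n" "v < n"
  then show "(path_graph n)\<^sup>*\<^sup>* u v"
    using path_graph_rtranclp[of u "v - u" n] path_graph_rtranclp[of v "u - v" n]
    by (cases "u \<le> v") auto
qed

lemma degree_path_graph_reflect:
  assumes "v < n" shows "degree n (path_graph n) (n - 1 - v) = degree n (path_graph n) v"
proof -
  have "{x. x < n \<and> path_graph n (n - 1 - v) x} = (\<lambda>x. n - 1 - x) ` {x. x < n \<and> path_graph n v x}"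
  proof (rule set_eqI, rule iffI)
    fix x assume "x \<in> {x. x < n \<and> path_graph n (n - 1 - v) x}"
    then have "n - 1 - x \<in> {x. x < n \<and> path_graph n v x}" and "x = n - 1 - (n - 1 - x)"
      using assms by (auto simp: path_graph_def)
    then show "x \<in> (\<lambda>x. n - 1 - x) ` {x. x < n \<and> path_graph n v x}" by blast
  qed (use assms in \<open>auto simp: path_graph_def\<close>)
  moreover have "inj_on (\<lambda>x. n - 1 - x) {x. x < n \<and> path_graph n v x}"
    by (auto simp: inj_on_def)
  ultimately show ?thesis unfolding degree_def by (simp add: card_image)
qed

lemma path_sign_reflect: "v < n \<Longrightarrow> path_sign n (n - 1 - v) = - path_sign n v"
  by (auto simp: path_sign_def)

lemma admissible_path_sign: "2 \<le> n \<Longrightarrow> admissible n (path_graph n) (path_sign n)"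
proof -
  let ?S = "\<Sum>v<n. path_sign n v * real (degree n (path_graph n) v)"
  assume n: "2 \<le> n"
  text \<open>The reflection \<open>v \<mapsto> n - 1 - v\<close> preserves degrees and flips the sign of \<open>path_sign\<close>.\<close>
  have "?S = (\<Sum>v<n. path_sign n (n - 1 - v) * real (degree n (path_graph n) (n - 1 - v)))"
    by (rule sum.reindex_bij_witness[of _ "\<lambda>v. n - 1 - v" "\<lambda>v. n - 1 - v"]) auto
  also have "\<dots> = (\<Sum>v<n. - (path_sign n v * real (degree n (path_graph n) v)))"
  proof (rule sum.cong)
    fix v assume "v \<in> {..<n}"
    then show "path_sign n (n - 1 - v) * real (degree n (path_graph n) (n - 1 - v))
        = - (path_sign n v * real (degree n (path_graph n) v))"
      using path_sign_reflect[of v n] degree_path_graph_reflect[of v n] by simp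
  qed simp
  also have "\<dots> = - ?S" by (simp add: sum_negf)
  finally have "?S = 0" by simp
  moreover have "path_sign n 0 \<noteq> 0" using n by (simp add: path_sign_def)
  ultimately show ?thesis unfolding admissible_def using n by (auto intro!: exI[of _ 0])
qed

lemma edges_path_graph: "edges n (path_graph n) = (\<lambda>u. (u, Suc u)) ` {..<n - 1}"
  by (auto simp: edges_def path_graph_def image_iff)

lemma dirichlet_energy_path_sign: "2 \<le> n \<Longrightarrow> dirichlet_energy n (path_graph n) (path_sign n) \<le> 4"
proof -
  assume n: "2 \<le> n"
  have "dirichlet_energy n (path_graph n) (path_sign n)
      = (\<Sum>u<n - 1. (path_sign n u - path_sign n (Suc u))^2)"
    unfolding dirichlet_energy_def edges_path_graph by (subst sum.reindex) (auto simp: inj_on_def)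
  also have "\<dots> \<le> (\<Sum>u<n - 1. 2 * (path_sign n (Suc u) - path_sign n u))"
    by (intro sum_mono) (auto simp: path_sign_def)
  also have "\<dots> = 2 * (\<Sum>u<n - 1. path_sign n (Suc u) - path_sign n u)"
    by (simp add: sum_distrib_left)
  also have "\<dots> = 2 * (path_sign n (n - 1) - path_sign n 0)"
    by (simp only: sum_lessThan_telescope)
  also have "\<dots> = 4" using n by (auto simp: path_sign_def)
  finally show ?thesis .
qed

lemma degree_norm_path_sign: "2 \<le> n \<Longrightarrow> real n - 1 \<le> degree_norm n (path_graph n) (path_sign n)"
proof -
  assume n: "2 \<le> n"
  have deg: "1 \<le> degree n (path_graph n) v" if "v < n" for v
    using degree_ge_1[OF simple_path_graph connected_path_graph] n that by simp
  have "real n - 1 = (\<Sum>v<n. 1 - (if v = (n - 1) div 2 then 1 else 0 :: real))"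
    using n by (simp add: sum_subtractf)
  also have "\<dots> \<le> degree_norm n (path_graph n) (path_sign n)"
    unfolding degree_norm_def
  proof (intro sum_mono)
    fix v assume "v \<in> {..<n}"
    then have "1 - (if v = (n - 1) div 2 then 1 else 0) \<le> (path_sign n v)^2"
      and "(path_sign n v)^2 \<le> (path_sign n v)^2 * real (degree n (path_graph n) v)"
      using deg[of v] by (auto simp: path_sign_def mult_le_cancel_left1)
    then show "1 - (if v = (n - 1) div 2 then 1 else 0) \<le> (path_sign n v)^2 * real (degree n (path_graph n) v)"
      by linarith
  qed
  finally show ?thesis .
qed

lemma alpha_le_path_bound: "2 \<le> n \<Longrightarrow> alpha n \<le> 4 / (real n - 1)"
proof -
  assume n: "2 \<le> n"
  have "alpha n \<le> lambda1 n (path_graph n)"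
    using n by (intro alpha_le_lambda1 simple_path_graph connected_path_graph) simp
  also have "\<dots> \<le> rayleigh n (path_graph n) (path_sign n)"
    using n by (intro lambda1_le_rayleigh admissible_path_sign)
  also have "\<dots> \<le> 4 / (real n - 1)"
    unfolding rayleigh_eq
  proof (rule frac_le)
    show "0 \<le> (4::real)" "0 < real n - 1" using n by simp_all
    show "dirichlet_energy n (path_graph n) (path_sign n) \<le> 4"
      using n by (rule dirichlet_energy_path_sign)
    show "real n - 1 \<le> degree_norm n (path_graph n) (path_sign n)"
      using n by (rule degree_norm_path_sign)
  qed
  finally show ?thesis .
qed

lemma alpha_less_half: "10 \<le> n \<Longrightarrow> alpha n < 1/2"
proof -
  assume n: "10 \<le> n"
  then have "4 / (real n - 1) < 1/2" by (simp add: divide_less_eq)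
  with alpha_le_path_bound[of n] n show ?thesis by linarith
qed

lemma simple_graph_delete_edge: "simple_graph n E \<Longrightarrow> simple_graph n (delete_edge E w z)"
  unfolding simple_graph_def delete_edge_def by (auto simp: insert_commute)

lemma real_card_Diff_singleton:
  "finite A \<Longrightarrow> x \<in> A \<Longrightarrow> real (card (A - {x})) = real (card A) - 1"
proof -
  assume "finite A" "x \<in> A"
  then have "1 \<le> card A" by (simp add: Suc_le_eq card_gt_0_iff) blast
  with \<open>x \<in> A\<close> show ?thesis by (simp add: card_Diff_singleton of_nat_diff)
qed

lemma degree_delete_edge:
  assumes s: "simple_graph n E" and e: "E w z"
  shows "real (degree n (delete_edge E w z) u)
    = real (degree n E u) - (if u = w then 1 else 0) - (if u = z then 1 else 0)"
proof -
  have wz: "w \<noteq> z" "w < n" "z < n" and ezw: "E z w" using s e unfolding simple_graph_def by auto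
  consider "u = w" | "u = z" | "u \<noteq> w" "u \<noteq> z" by blast
  then show ?thesis
  proof cases
    case 1
    then have nbrs: "{v. v < n \<and> delete_edge E w z u v} = {v. v < n \<and> E u v} - {z}"
      by (auto simp: delete_edge_def doubleton_eq_iff)
    show ?thesis
      unfolding degree_def nbrs by (subst real_card_Diff_singleton) (use 1 wz e in auto)
  next
    case 2
    then have nbrs: "{v. v < n \<and> delete_edge E w z u v} = {v. v < n \<and> E u v} - {w}"
      using wz by (auto simp: delete_edge_def doubleton_eq_iff)
    show ?thesis
      unfolding degree_def nbrs by (subst real_card_Diff_singleton) (use 2 wz ezw in auto)
  next
    case 3
    then show ?thesis by (simp add: degree_def delete_edge_def doubleton_eq_iff)
  qed
qed

lemma sum_degree_delete_edge:
  assumes s: "simple_graph n E" and e: "E w z"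
  shows "(\<Sum>u<n. \<phi> u * real (degree n (delete_edge E w z) u))
    = (\<Sum>u<n. \<phi> u * real (degree n E u)) - \<phi> w - \<phi> z"
proof -
  have "w < n" "z < n" using s e unfolding simple_graph_def by auto
  then show ?thesis
    by (simp add: degree_delete_edge[OF s e] algebra_simps sum_subtractf sum.distrib
        if_distrib[of "\<lambda>x. \<phi> _ * x"] cong: if_cong)
qed

lemma edges_delete_edge:
  assumes "simple_graph n E"
  shows "edges n (delete_edge E w z) = edges n E - {(min w z, max w z)}"
  using assms unfolding edges_def delete_edge_def simple_graph_def
  by (auto simp: doubleton_eq_iff min_def max_def)

lemma dirichlet_energy_delete_edge:
  assumes s: "simple_graph n E" and e: "E w z"
  shows "dirichlet_energy n (delete_edge E w z) f = dirichlet_energy n E f - (f w - f z)^2"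
proof -
  have "(min w z, max w z) \<in> edges n E"
    using s e unfolding simple_graph_def edges_def by (auto simp: min_def max_def nat_less_le)
  moreover have "(f (min w z) - f (max w z))^2 = (f w - f z)^2"
    by (cases "w \<le> z") (auto simp: min_def max_def power2_commute)
  ultimately show ?thesis
    unfolding dirichlet_energy_def edges_delete_edge[OF s]
    by (simp add: sum_diff1 finite_edges)
qed

text \<open>Here \<open>(a + b)\<^sup>2 / V\<close> is the part of the degree norm lost by the shift that restores
orthogonality to the degrees after deleting the edge.\<close>
lemma half_le_of_sq_diff_le:
  fixes a b \<rho> V :: real
  assumes ab: "a * b \<le> 0" "a \<noteq> 0" and V: "1 \<le> V" and \<rho>: "0 \<le> \<rho>"
    and le: "(a - b)^2 \<le> \<rho> * (a^2 + b^2 + (a + b)^2 / V)"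
  shows "1/2 \<le> \<rho>"
proof -
  have "(a + b)^2 / V \<le> (a + b)^2"
    using V by (simp add: divide_le_eq mult_le_cancel_left1)
  also have "\<dots> \<le> a^2 + b^2" using ab by (simp add: power2_eq_square algebra_simps)
  finally have "\<rho> * (a^2 + b^2 + (a + b)^2 / V) \<le> \<rho> * (2 * (a^2 + b^2))"
    using \<rho> by (intro mult_left_mono) simp_all
  moreover have "a^2 + b^2 \<le> (a - b)^2" using ab by (simp add: power2_eq_square algebra_simps)
  ultimately have "1 * (a^2 + b^2) \<le> (2 * \<rho>) * (a^2 + b^2)"
    using le by (simp add: algebra_simps)
  moreover have "0 < a^2 + b^2" using ab by (simp add: add_pos_nonneg)
  ultimately show ?thesis by (simp only: mult_le_cancel_right) simp
qed

lemma shift_delete_edge: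
  assumes s: "simple_graph n E" and e: "E w z"
    and f: "(\<Sum>u<n. f u * real (degree n E u)) = 0" and V: "volume n (delete_edge E w z) \<noteq> 0"
  defines "g \<equiv> \<lambda>u. f u + (f w + f z) / volume n (delete_edge E w z)"
  shows "(\<Sum>u<n. g u * real (degree n (delete_edge E w z) u)) = 0"
    and "degree_norm n (delete_edge E w z) g
      = degree_norm n E f - ((f w)^2 + (f z)^2 + (f w + f z)^2 / volume n (delete_edge E w z))"
    and "dirichlet_energy n (delete_edge E w z) g = dirichlet_energy n E f - (f w - f z)^2"
proof -
  let ?E' = "delete_edge E w z" and ?c = "(f w + f z) / volume n (delete_edge E w z)"
  have f': "(\<Sum>u<n. f u * real (degree n ?E' u)) = - f w - f z"
    using sum_degree_delete_edge[OF s e, of f] f by simp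
  have "(\<Sum>u<n. g u * real (degree n ?E' u)) = (\<Sum>u<n. f u * real (degree n ?E' u)) + ?c * volume n ?E'"
    by (simp only: g_def volume_def distrib_right sum.distrib sum_distrib_left)
  then show "(\<Sum>u<n. g u * real (degree n ?E' u)) = 0"
    using f' V by simp
  have "degree_norm n ?E' f = degree_norm n E f - (f w)^2 - (f z)^2"
    using sum_degree_delete_edge[OF s e, of "\<lambda>u. (f u)^2"] unfolding degree_norm_def by simp
  then have "degree_norm n ?E' g
      = (degree_norm n E f - (f w)^2 - (f z)^2) + 2 * ?c * (- f w - f z) + ?c^2 * volume n ?E'"
    by (simp only: g_def degree_norm_add_const f')
  also have "\<dots> = degree_norm n E f - ((f w)^2 + (f z)^2 + (f w + f z)^2 / volume n ?E')"
    using V by (simp add: field_simps power2_eq_square)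
  finally show "degree_norm n ?E' g
      = degree_norm n E f - ((f w)^2 + (f z)^2 + (f w + f z)^2 / volume n ?E')" .
  show "dirichlet_energy n ?E' g = dirichlet_energy n E f - (f w - f z)^2"
    unfolding g_def dirichlet_energy_add_const by (rule dirichlet_energy_delete_edge[OF s e])
qed

lemma half_le_rayleigh_if_not_bridge:
  assumes s: "simple_graph n E" and c: "connected_graph n E" and e: "E w z"
    and c': "connected_graph n (delete_edge E w z)"
    and f: "admissible n E f" and fw: "f w < 0" and fz: "0 \<le> f z"
    and le: "rayleigh n E f \<le> lambda1 n (delete_edge E w z)"
  shows "1/2 \<le> rayleigh n E f"
proof -
  define E' where "E' = delete_edge E w z"
  define g where "g u = f u + (f w + f z) / volume n E'" for u
  define \<rho> where "\<rho> = rayleigh n E f"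
  have wz: "w < n" "z < n" "w \<noteq> z" using s e unfolding simple_graph_def by auto
  have deg: "1 \<le> degree n E u" if "u < n" for u
    using degree_ge_1[OF s c _ that] wz by linarith
  have deg': "1 \<le> degree n E' u" if "u < n" for u
    using degree_ge_1[OF simple_graph_delete_edge[OF s] c' _ that] wz unfolding E'_def by linarith
  have "real (degree n E' w) \<le> volume n E'" unfolding volume_def using wz by (intro member_le_sum) auto
  then have V: "1 \<le> volume n E'" using deg'[of w] wz by linarith
  have f_deg: "(\<Sum>u<n. f u * real (degree n E u)) = 0" using f unfolding admissible_def by simp
  have "volume n (delete_edge E w z) \<noteq> 0" using V unfolding E'_def by simp
  note shift = shift_delete_edge[OF s e f_deg this, folded E'_def, folded g_def]
  have "g w \<noteq> 0 \<or> g z \<noteq> 0" using fw fz unfolding g_def by auto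
  then have g: "admissible n E' g" unfolding admissible_def using shift(1) wz by auto
  have pos: "0 < degree_norm n E f" using deg wz fw by (intro degree_norm_pos) auto
  have pos': "0 < degree_norm n E' g"
    using g deg' unfolding admissible_def by (metis degree_norm_pos)
  have energy_f: "dirichlet_energy n E f = \<rho> * degree_norm n E f"
    using pos unfolding \<rho>_def rayleigh_eq by simp
  have "\<rho> \<le> rayleigh n E' g"
    using le lambda1_le_rayleigh[OF g] unfolding \<rho>_def E'_def by linarith
  then have "\<rho> * degree_norm n E' g \<le> dirichlet_energy n E' g"
    using pos' unfolding rayleigh_eq by (simp add: le_divide_eq)
  then have "(f w - f z)^2 \<le> \<rho> * ((f w)^2 + (f z)^2 + (f w + f z)^2 / volume n E')"
    using V unfolding shift(2,3) energy_f by (simp add: algebra_simps)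
  moreover have "f w * f z \<le> 0" "f w \<noteq> 0" using fw fz by (simp_all add: mult_nonpos_nonneg)
  moreover have "0 \<le> \<rho>" unfolding \<rho>_def by (rule rayleigh_nonneg)
  ultimately show ?thesis
    unfolding \<rho>_def[symmetric] by (intro half_le_of_sq_diff_le[OF _ _ V])
qed

theorem mainTheorem9:
  "\<exists>n0::nat. \<forall>n\<ge>n0. \<forall>E f w z.
     simple_graph n E \<and> connected_graph n E \<and> lambda1 n E = alpha n \<and>
     harmonic_eigenfunction n E f \<and> w < n \<and> z < n \<and> E w z \<and> f w < 0 \<and> 0 \<le> f z
     \<longrightarrow> is_bridge n E w z"
proof (intro exI[of _ 10] allI impI, elim conjE)
  fix n E f w z
  assume n: "10 \<le> n" and s: "simple_graph n E" and c: "connected_graph n E"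
    and \<alpha>: "lambda1 n E = alpha n" and f: "harmonic_eigenfunction n E f"
    and "w < n" "z < n" and e: "E w z" and fw: "f w < 0" and fz: "0 \<le> f z"
  show "is_bridge n E w z"
  proof (rule ccontr)
    assume "\<not> is_bridge n E w z"
    then have c': "connected_graph n (delete_edge E w z)" using e by (simp add: is_bridge_def)
    have "rayleigh n E f = alpha n" using f \<alpha> by (simp add: harmonic_eigenfunction_def)
    moreover have "alpha n \<le> lambda1 n (delete_edge E w z)"
      by (rule alpha_le_lambda1[OF simple_graph_delete_edge[OF s] c'])
    ultimately have "1/2 \<le> alpha n"
      using half_le_rayleigh_if_not_bridge[OF s c e c' _ fw fz] f
      by (simp add: harmonic_eigenfunction_def)
    with alpha_less_half[OF n] show False by linarith
  qed
qed

end
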